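(* Let $T$ be a phylogenetic tree on a leaf set $X$ with $|X|\ge4$, equipped with the quartet metrization $w$. Then $w(e)\ge|X|-2$ for every edge $e$ of $T$.
   Context: A phylogenetic tree on $X$ is an unrooted tree whose leaves are bijectively labeled by $X$ and all of whose non-leaf nodes have degree 3. Each internal edge $e$ determines a partition of $X$ into four nonempty blocks $X_1,X_2,X_3,X_4$, where $e$ induces the split $X_1\cup X_2|X_3\cup X_4$ and the four edges adjacent to $e$ induce splits each separating one $X_i$ from the rest; the quartet metrization assigns $w(e)=|X_1||X_2|+|X_3||X_4|$. Each pendant edge $e$ incident to leaf $x$ determines a tripartition $(\{x\},X_1,X_2)$, where $X_1,X_2$ are the leaf sets separated by the two other edges at the non-leaf end of $e$; the quartet metrization assigns $w(e)=|X_1||X_2|$. *)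

theory Defs
  imports Main
begin

definition simple_graph :: "'v set \<Rightarrow> 'v set set \<Rightarrow> bool" where
  "simple_graph V E \<longleftrightarrow> finite V \<and>
     (\<forall>e\<in>E. \<exists>u v. u \<noteq> v \<and> u \<in> V \<and> v \<in> V \<and> e = {u, v})"

definition reachable :: "'v set set \<Rightarrow> 'v \<Rightarrow> 'v \<Rightarrow> bool" where
  "reachable F a b \<longleftrightarrow> (a, b) \<in> {(x, y). {x, y} \<in> F}\<^sup>*"

definition nbrs :: "'v set set \<Rightarrow> 'v \<Rightarrow> 'v set" where
  "nbrs E u = {v. {u, v} \<in> E}"

definition degree :: "'v set set \<Rightarrow> 'v \<Rightarrow> nat" where
  "degree E u = card (nbrs E u)"

definition is_tree :: "'v set \<Rightarrow> 'v set set \<Rightarrow> bool" where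
  "is_tree V E \<longleftrightarrow> simple_graph V E \<and> V \<noteq> {} \<and>
     (\<forall>a\<in>V. \<forall>b\<in>V. reachable E a b) \<and>
     (\<forall>u v. {u, v} \<in> E \<longrightarrow> \<not> reachable (E - {{u, v}}) u v)"

definition leaves :: "'v set \<Rightarrow> 'v set set \<Rightarrow> 'v set" where
  "leaves V E = {v\<in>V. degree E v = 1}"

definition phylogenetic_tree :: "'a set \<Rightarrow> 'v set \<Rightarrow> 'v set set \<Rightarrow> ('a \<Rightarrow> 'v) \<Rightarrow> bool" where
  "phylogenetic_tree X V E lab \<longleftrightarrow> is_tree V E \<and>
     bij_betw lab X (leaves V E) \<and>
     (\<forall>v\<in>V - leaves V E. degree E v = 3)"

text \<open>For an edge {u,a}: the leaf labels on the side of a, i.e. labels of leaves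
  reachable from a after deleting the edge {u,a}. This is the block of the split
  induced by edge {u,a} not containing u.\<close>
definition side :: "'a set \<Rightarrow> 'v set set \<Rightarrow> ('a \<Rightarrow> 'v) \<Rightarrow> 'v \<Rightarrow> 'v \<Rightarrow> 'a set" where
  "side X E lab u a = {x\<in>X. reachable (E - {{u, a}}) a (lab x)}"

definition half_weight :: "'a set \<Rightarrow> 'v set set \<Rightarrow> ('a \<Rightarrow> 'v) \<Rightarrow> 'v \<Rightarrow> 'v \<Rightarrow> nat" where
  "half_weight X E lab u v = (\<Prod>a\<in>nbrs E u - {v}. card (side X E lab u a))"

text \<open>Quartet metrization of edge {u,v}: internal edge gives |X1||X2|+|X3||X4|,
  pendant edge (one endpoint a leaf) gives |X1||X2| for the non-leaf endpoint.\<close>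
definition quartet_weight :: "'a set \<Rightarrow> 'v set \<Rightarrow> 'v set set \<Rightarrow> ('a \<Rightarrow> 'v) \<Rightarrow> 'v \<Rightarrow> 'v \<Rightarrow> nat" where
  "quartet_weight X V E lab u v =
     (if u \<in> leaves V E then 0 else half_weight X E lab u v) +
     (if v \<in> leaves V E then 0 else half_weight X E lab v u)"

end

theory Submission
  imports Defs
begin

text \<open>Every leaf label of X lies at an endpoint p of the edge {u, v} or behind one of the
  other edges at p. If p is a leaf there are no other edges and at most one label. If p is
  internal, its two other edges lead to nonempty leaf sets A and B, so they hold at most
  |A| + |B| \<le> |A| |B| + 1 labels, and |A| |B| is the contribution of p to w(e). Adding the
  two endpoints gives |X| \<le> w(e) + 2.\<close>

lemma reachable_sym: "reachable F a b \<Longrightarrow> reachable F b a"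
proof -
  have "sym {(x, y). {x, y} \<in> F}" by (auto simp: sym_def insert_commute)
  then show "reachable F a b \<Longrightarrow> reachable F b a"
    unfolding reachable_def by (auto dest: symD sym_rtrancl)
qed

lemma reachable_mono: "F \<subseteq> G \<Longrightarrow> reachable F a b \<Longrightarrow> reachable G a b"
  unfolding reachable_def by (erule rtrancl_mono[THEN subsetD, rotated]) auto

lemma reachable_path:
  "successively (\<lambda>x y. {x, y} \<in> F) p \<Longrightarrow> p \<noteq> [] \<Longrightarrow> reachable F (hd p) (last p)"
proof (induction p rule: induct_list012)
  case (3 x y xs)
  then show ?case unfolding reachable_def by (auto intro: converse_rtrancl_into_rtrancl)
qed (auto simp: reachable_def)

lemma reachable_first_step:
  assumes "reachable E u w" "w \<noteq> u"
  shows "\<exists>n\<in>nbrs E u. reachable (E - {{u, n}}) n w"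
  using assms unfolding reachable_def
proof (induction rule: rtrancl_induct)
  case (step y z)
  have yz: "{y, z} \<in> E" using step.hyps(2) by simp
  show ?case
  proof (cases "y = u")
    case True
    then show ?thesis using yz by (auto simp: nbrs_def)
  next
    case False
    with step.IH obtain n where n: "n \<in> nbrs E u" "(n, y) \<in> {(x, y). {x, y} \<in> E - {{u, n}}}\<^sup>*"
      by blast
    show ?thesis
    proof (cases "{y, z} = {u, n}")
      case True
      with False step.prems show ?thesis by (auto simp: doubleton_eq_iff)
    next
      case False
      with n yz show ?thesis by (blast intro: rtrancl_into_rtrancl)
    qed
  qed
qed simp

lemma simple_graph_edgeD:
  assumes "simple_graph V E" "{x, y} \<in> E"
  shows "x \<in> V" "y \<in> V" "x \<noteq> y"
  using assms unfolding simple_graph_def by (auto simp: doubleton_eq_iff)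

lemma acyclic_path_no_chord:
  assumes bridges: "\<And>x y. {x, y} \<in> E \<Longrightarrow> \<not> reachable (E - {{x, y}}) x y"
    and path: "successively (\<lambda>x y. {x, y} \<in> E) (h # xs)" and dist: "distinct (h # xs)"
    and chord: "{h, y} \<in> E" and y: "y \<in> set xs"
  shows "y = hd xs"
proof (rule ccontr)
  assume y_ne_hd: "y \<noteq> hd xs"
  obtain ys zs where xs: "xs = ys @ y # zs" using split_list[OF y] by blast
  with y_ne_hd have "ys \<noteq> []" by auto
  have edges: "{h, hd ys} \<in> E" "successively (\<lambda>x y. {x, y} \<in> E) (ys @ [y])"
    using path \<open>ys \<noteq> []\<close> unfolding xs
    by (simp_all add: successively_Cons successively_append_iff)
  have "h \<notin> set (ys @ [y])" "y \<notin> set ys" "hd ys \<in> set ys"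
    using dist \<open>ys \<noteq> []\<close> unfolding xs by auto
  then have "{h, hd ys} \<in> E - {{h, y}}"
    and "successively (\<lambda>x z. {x, z} \<in> E - {{h, y}}) (ys @ [y])"
    using edges by (auto simp: doubleton_eq_iff intro: successively_mono[OF edges(2)])
  with \<open>ys \<noteq> []\<close> have "successively (\<lambda>x z. {x, z} \<in> E - {{h, y}}) (h # ys @ [y])"
    by (simp add: successively_Cons)
  from reachable_path[OF this] bridges[OF chord] show False by simp
qed

lemma unextendable_path_end_degree:
  assumes sg: "simple_graph V E"
    and bridges: "\<And>x y. {x, y} \<in> E \<Longrightarrow> \<not> reachable (E - {{x, y}}) x y"
    and path: "successively (\<lambda>x y. {x, y} \<in> E) (h # xs)" and dist: "distinct (h # xs)"
    and "xs \<noteq> []" and unextendable: "\<And>y. {h, y} \<in> E \<Longrightarrow> y \<in> set (h # xs)"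
  shows "degree E h = 1"
proof -
  have "y = hd xs" if hy: "{h, y} \<in> E" for y
  proof -
    from unextendable[OF hy] simple_graph_edgeD(3)[OF sg hy] have "y \<in> set xs" by simp
    with bridges path dist hy show ?thesis by (rule acyclic_path_no_chord)
  qed
  moreover have "{h, hd xs} \<in> E" using path \<open>xs \<noteq> []\<close> by (cases xs) auto
  ultimately have "nbrs E h = {hd xs}" unfolding nbrs_def by blast
  then show ?thesis by (simp add: degree_def)
qed

lemma reachable_path_butlast:
  assumes "successively (\<lambda>x y. {x, y} \<in> E) (xs @ [u])" "distinct (xs @ [u])" "xs \<noteq> []"
  shows "reachable (E - {{u, last xs}}) (last xs) (hd xs)"
proof -
  from assms(1,2) have "successively (\<lambda>x y. {x, y} \<in> E) xs" "u \<notin> set xs"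
    by (simp_all add: successively_append_iff)
  then have "successively (\<lambda>x y. {x, y} \<in> E - {{u, last xs}}) xs"
    by (auto simp: doubleton_eq_iff intro: successively_mono)
  from reachable_path[OF this assms(3)] show ?thesis by (rule reachable_sym)
qed

text \<open>The leaf is the far end of a longest path ending with the edge from a to u.\<close>
lemma tree_leaf_beyond_edge:
  assumes tree: "is_tree V E" and ua: "{u, a} \<in> E"
  obtains h where "h \<in> V" "degree E h = 1" "reachable (E - {{u, a}}) a h"
proof -
  have sg: "simple_graph V E" and fin: "finite V"
    and bridges: "\<And>x y. {x, y} \<in> E \<Longrightarrow> \<not> reachable (E - {{x, y}}) x y"
    using tree unfolding is_tree_def simple_graph_def by auto
  define is_path where "is_path p \<longleftrightarrow> distinct p \<and> set p \<subseteq> V \<and>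
      successively (\<lambda>x y. {x, y} \<in> E) p \<and> (\<exists>r. p = r @ [a, u])" for p
  have "is_path [a, u]"
    using simple_graph_edgeD[OF sg ua] ua by (auto simp: is_path_def insert_commute)
  moreover have "length p < Suc (card V)" if "is_path p" for p
    using that distinct_card[of p] card_mono[OF fin, of "set p"] by (simp add: is_path_def)
  ultimately obtain p where p: "is_path p"
    and longest: "\<And>p'. is_path p' \<Longrightarrow> length p' \<le> length p"
    using ex_has_greatest_nat[of is_path "[a, u]" length] by metis
  then obtain r where r: "p = r @ [a, u]" by (auto simp: is_path_def)
  obtain h q where hq: "p = h # q" "q \<noteq> []" using r by (cases r) auto
  have "y \<in> set p" if hy: "{h, y} \<in> E" for y
  proof (rule ccontr)
    assume "y \<notin> set p"
    moreover have "successively (\<lambda>x y. {x, y} \<in> E) (y # p)"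
      using p hy unfolding is_path_def hq by (simp add: successively_Cons insert_commute)
    moreover have "y # p = (y # r) @ [a, u]" using r by simp
    ultimately have "is_path (y # p)"
      using p simple_graph_edgeD[OF sg hy] unfolding is_path_def by auto
    with longest[of "y # p"] show False by simp
  qed
  moreover have "successively (\<lambda>x y. {x, y} \<in> E) (h # q)" "distinct (h # q)" "h \<in> V"
    using p unfolding is_path_def hq(1) by auto
  ultimately have "degree E h = 1" "h \<in> V"
    using unextendable_path_end_degree[OF sg bridges _ _ hq(2)] unfolding hq(1) by auto
  moreover have "reachable (E - {{u, a}}) a h"
    using reachable_path_butlast[of E "r @ [a]" u] p hq(1)
    unfolding is_path_def r by (cases r) auto
  ultimately show ?thesis using that by blast
qed

text \<open>In a tree this is side X E lab q p; listing it by the edges at p is what makes it countable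
  in terms of half_weight.\<close>
definition near_side :: "'a set \<Rightarrow> 'v set set \<Rightarrow> ('a \<Rightarrow> 'v) \<Rightarrow> 'v \<Rightarrow> 'v \<Rightarrow> 'a set" where
  "near_side X E lab p q = {x\<in>X. lab x = p} \<union> (\<Union>n\<in>nbrs E p - {q}. side X E lab p n)"

lemma side_subset_near_side:
  assumes "{p, q} \<in> E"
  shows "side X E lab p q \<subseteq> near_side X E lab q p"
proof
  fix x assume x: "x \<in> side X E lab p q"
  show "x \<in> near_side X E lab q p"
  proof (cases "lab x = q")
    case False
    from x have "reachable (E - {{p, q}}) q (lab x)" by (simp add: side_def)
    from reachable_first_step[OF this False] obtain n where
      "n \<in> nbrs (E - {{p, q}}) q" "reachable (E - {{p, q}} - {{q, n}}) n (lab x)" by blast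
    then have "n \<in> nbrs E q - {p}" "x \<in> side X E lab q n"
      using x by (auto simp: nbrs_def side_def insert_commute intro: reachable_mono[rotated])
    then show ?thesis by (auto simp: near_side_def)
  qed (use x in \<open>simp add: side_def near_side_def\<close>)
qed

lemma near_side_subset: "near_side X E lab p q \<subseteq> X"
  by (auto simp: near_side_def side_def)

lemma subset_near_side_Un_side:
  assumes "\<And>x. x \<in> X \<Longrightarrow> reachable E p (lab x)"
  shows "X \<subseteq> near_side X E lab p q \<union> side X E lab p q"
proof
  fix x assume x: "x \<in> X"
  show "x \<in> near_side X E lab p q \<union> side X E lab p q"
  proof (cases "lab x = p")
    case False
    with reachable_first_step[OF assms[OF x]] x show ?thesis
      by (auto simp: near_side_def side_def)
  qed (use x in \<open>simp add: near_side_def\<close>)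
qed

lemma add_le_mult_add_1: "(m::nat) \<ge> 1 \<Longrightarrow> n \<ge> 1 \<Longrightarrow> m + n \<le> m * n + 1"
  by (cases m; cases n) auto

locale phylogenetic =
  fixes X :: "'a set" and V :: "'v set" and E :: "'v set set" and lab :: "'a \<Rightarrow> 'v"
  assumes phylogenetic_tree: "phylogenetic_tree X V E lab"
begin

lemma tree: "is_tree V E"
  using phylogenetic_tree by (simp add: phylogenetic_tree_def)

lemma bij_lab: "bij_betw lab X (leaves V E)"
  using phylogenetic_tree by (simp add: phylogenetic_tree_def)

lemma finite_X: "finite X"
proof -
  have "finite (leaves V E)"
    using tree by (simp add: is_tree_def simple_graph_def leaves_def)
  with bij_lab show ?thesis by (simp add: bij_betw_finite)
qed

lemma side_nonempty:
  assumes "{p, c} \<in> E"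
  shows "side X E lab p c \<noteq> {}"
proof -
  obtain h where "h \<in> V" "degree E h = 1" and reach: "reachable (E - {{p, c}}) c h"
    using tree_leaf_beyond_edge[OF tree assms] .
  then have "h \<in> lab ` X"
    using bij_lab unfolding bij_betw_def by (simp add: leaves_def)
  with reach show ?thesis by (auto simp: side_def)
qed

lemma card_near_side_le:
  assumes pq: "{p, q} \<in> E"
  shows "card (near_side X E lab p q)
           \<le> (if p \<in> leaves V E then 0 else half_weight X E lab p q) + 1"
proof -
  have "p \<in> V" using tree simple_graph_edgeD(1)[OF _ pq] by (simp add: is_tree_def)
  have "q \<in> nbrs E p" using pq by (simp add: nbrs_def)
  show ?thesis
  proof (cases "p \<in> leaves V E")
    case True
    then have "card (nbrs E p) = 1" by (simp add: leaves_def degree_def)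
    with \<open>q \<in> nbrs E p\<close> have "nbrs E p = {q}" by (metis card_1_singletonE singletonD)
    then have "near_side X E lab p q = {x\<in>X. lab x = p}" by (simp add: near_side_def)
    moreover have "card {x\<in>X. lab x = p} \<le> 1"
      using bij_lab finite_X by (auto simp: card_le_Suc0_iff_eq bij_betw_def inj_on_def)
    ultimately show ?thesis using True by simp
  next
    case False
    with \<open>p \<in> V\<close> have "card (nbrs E p) = 3"
      using phylogenetic_tree by (simp add: phylogenetic_tree_def degree_def)
    with \<open>q \<in> nbrs E p\<close> have "card (nbrs E p - {q}) = 2"
      by (simp add: card_Diff_singleton_if card_ge_0_finite)
    then obtain a b where ab: "nbrs E p - {q} = {a, b}" "a \<noteq> b" by (meson card_2_iff)
    then have "{p, a} \<in> E" "{p, b} \<in> E" by (auto simp: nbrs_def)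
    then have "card (side X E lab p a) \<ge> 1" "card (side X E lab p b) \<ge> 1"
      using side_nonempty finite_subset[OF _ finite_X]
      by (auto simp: Suc_le_eq card_gt_0_iff side_def)
    have no_label: "{x\<in>X. lab x = p} = {}" using False bij_betw_apply[OF bij_lab] by blast
    have "near_side X E lab p q = side X E lab p a \<union> side X E lab p b"
      unfolding near_side_def ab no_label by simp
    then have "card (near_side X E lab p q) \<le> card (side X E lab p a) + card (side X E lab p b)"
      by (simp add: card_Un_le)
    also have "\<dots> \<le> card (side X E lab p a) * card (side X E lab p b) + 1"
      by (rule add_le_mult_add_1) fact+
    also have "\<dots> = half_weight X E lab p q + 1"
      using ab by (simp add: half_weight_def)
    finally show ?thesis using False by simp
  qed
qed

lemma subset_near_sides:
  assumes "{p, q} \<in> E"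
  shows "X \<subseteq> near_side X E lab p q \<union> near_side X E lab q p"
proof -
  have "p \<in> V"
    using tree simple_graph_edgeD(1)[OF _ assms] by (simp add: is_tree_def)
  moreover have "lab x \<in> V" if "x \<in> X" for x
    using bij_betw_apply[OF bij_lab that] by (simp add: leaves_def)
  moreover have "reachable E a b" if "a \<in> V" "b \<in> V" for a b
    using tree that by (simp add: is_tree_def)
  ultimately have "X \<subseteq> near_side X E lab p q \<union> side X E lab p q"
    by (intro subset_near_side_Un_side) blast
  with side_subset_near_side[OF assms] show ?thesis
    by (meson Un_mono subset_refl subset_trans)
qed

end

theorem proposition2p11:
  fixes X :: "'a set" and V :: "'v set" and E :: "'v set set" and lab :: "'a \<Rightarrow> 'v"
  assumes "phylogenetic_tree X V E lab"
    and "card X \<ge> 4"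
    and "{u, v} \<in> E"
  shows "quartet_weight X V E lab u v \<ge> card X - 2"
proof -
  interpret phylogenetic X V E lab by (rule phylogenetic.intro) (rule assms(1))
  have vu: "{v, u} \<in> E" using assms(3) by (simp add: insert_commute)
  have "X = near_side X E lab u v \<union> near_side X E lab v u"
    using subset_near_sides[OF assms(3)] by (simp add: near_side_subset antisym)
  then have "card X \<le> card (near_side X E lab u v) + card (near_side X E lab v u)"
    by (metis card_Un_le)
  also have "\<dots> \<le> quartet_weight X V E lab u v + 2"
    using card_near_side_le[OF assms(3)] card_near_side_le[OF vu]
    unfolding quartet_weight_def by linarith
  finally show ?thesis by simp
qed

end
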